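(* Let $(J,\mathcal F)$, coefficients $b^S,w^S_j$, and $P(\mathcal F)$ be as in the context, with $P(\mathcal F)$ an $\mathcal F$-extended polymatroid. Let $\mathbf c\in\mathbb R^J$ and let algorithm $\mathrm{AG}_1$ on input $\mathbf c$ output $\boldsymbol\pi=(\pi_1,\dots,\pi_n)$ and $\boldsymbol\nu$; put $S_k=\{\pi_k,\dots,\pi_n\}$. (a) For every $\mathbf x\in\mathbb R^J$, $$\sum_{j\in J}c_jx_j=\nu_{\pi_1}\sum_{j\in S_1}w^{S_1}_jx_j+\sum_{k=2}^n(\nu_{\pi_k}-\nu_{\pi_{k-1}})\sum_{j\in S_k}w^{S_k}_jx_j,$$ and $\sum_{j\in J}c_jx^{\boldsymbol\pi}_j=\nu_{\pi_1}b^{S_1}+\sum_{k=2}^n(\nu_{\pi_k}-\nu_{\pi_{k-1}})b^{S_k}$. (b) If $\nu_{\pi_1}\le\nu_{\pi_2}\le\cdots\le\nu_{\pi_n}$, then $\mathbf x^{\boldsymbol\pi}$ and $\mathbf y^{\boldsymbol\pi}$ form an optimal primal-dual pair for the LP $\min\{\sum_jc_jx_j:\mathbf x\in P(\mathcal F)\}$ and its dual, and the optimal value is $\nu_{\pi_1}b^{S_1}+\sum_{k=2}^n(\nu_{\pi_k}-\nu_{\pi_{k-1}})b^{S_k}$.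
   Context: $J$ is a finite set, $|J|=n$; $\mathcal F\subseteq2^J$ with $\emptyset\in\mathcal F$, every nonempty $S\in\mathcal F$ having nonempty inner boundary $\partial^-S=\{j\in S:S\setminus\{j\}\in\mathcal F\}$, and every $S\in\mathcal F$, $S\ne J$, having some $j\in J\setminus S$ with $S\cup\{j\}\in\mathcal F$. A full $\mathcal F$-string is an ordering $\boldsymbol\pi=(\pi_1,\dots,\pi_n)$ of $J$ with $\{\pi_k,\dots,\pi_n\}\in\mathcal F$ for all $k$; $\Pi(\mathcal F)$ is the set of these. Given $b^S\ge0$ and $w^S_j>0$ for $j\in S\in\mathcal F$, $P(\mathcal F)=\{\mathbf x\in\mathbb R^J: \sum_{j\in S}w^S_jx_j\ge b^S\ (S\in\mathcal F\setminus\{J\}),\ \sum_{j\in J}w^J_jx_j=b^J,\ \mathbf x\ge0\}$. For $\boldsymbol\pi\in\Pi(\mathcal F)$, $\mathbf x^{\boldsymbol\pi}$ is the unique solution of $\sum_{l=k}^nw^{S_k}_{\pi_l}x_{\pi_l}=b^{S_k}$, $1\le k\le n$, where $S_k=\{\pi_k,\dots,\pi_n\}$. $P(\mathcal F)$ is an $\mathcal F$-extended polymatroid if $\mathbf x^{\boldsymbol\pi}\in P(\mathcal F)$ for all $\boldsymbol\pi\in\Pi(\mathcal F)$. The dual LP is $\max\{\sum_{S\in\mathcal F}b^Sy^S:\sum_{S:j\in S\in\mathcal F}w^S_jy^S\le c_j\ (j\in J),\ y^S\ge0\ (S\ne J),\ y^J\text{ free}\}$. Algorithm $\mathrm{AG}_1$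 on input $\mathbf c$: $S_1=J$, $y^{S_1}=\min\{c_j/w^{S_1}_j:j\in\partial^-S_1\}$, $\pi_1$ a minimizer, $\nu_{\pi_1}=y^{S_1}$; for $k=2,\dots,n$: $S_k=S_{k-1}\setminus\{\pi_{k-1}\}$, $y^{S_k}=\min\{(c_j-\sum_{l=1}^{k-1}y^{S_l}w^{S_l}_j)/w^{S_k}_j:j\in\partial^-S_k\}$, $\pi_k$ a minimizer, $\nu_{\pi_k}=\nu_{\pi_{k-1}}+y^{S_k}$. Define $\mathbf y^{\boldsymbol\pi}=(y^{\boldsymbol\pi,S})_{S\in\mathcal F}$ by $y^{\boldsymbol\pi,S_1}=\nu_{\pi_1}$, $y^{\boldsymbol\pi,S_k}=\nu_{\pi_k}-\nu_{\pi_{k-1}}$ for $2\le k\le n$, and $y^{\boldsymbol\pi,S}=0$ for all other $S\in\mathcal F$. *)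

theory Defs
  imports Main "HOL.Real"
begin

text \<open>Vectors in R^J are functions 'a => real that vanish outside J.
  A string (ordering) pi = (pi_1,...,pi_n) is a list p with p!(k-1) = pi_k (0-indexed).\<close>

definition inner_bd :: "'a set set \<Rightarrow> 'a set \<Rightarrow> 'a set" where
  "inner_bd F S = {j \<in> S. S - {j} \<in> F}"

definition Sk :: "'a list \<Rightarrow> nat \<Rightarrow> 'a set" where
  "Sk p k = set (drop k p)"

definition full_strings :: "'a set \<Rightarrow> 'a set set \<Rightarrow> 'a list set" where
  "full_strings J F = {p. distinct p \<and> set p = J \<and> (\<forall>k < length p. Sk p k \<in> F)}"

definition polyP :: "'a set \<Rightarrow> 'a set set \<Rightarrow> ('a set \<Rightarrow> 'a \<Rightarrow> real) \<Rightarrow> ('a set \<Rightarrow> real)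
    \<Rightarrow> ('a \<Rightarrow> real) set" where
  "polyP J F w b = {x. (\<forall>S \<in> F - {J}. (\<Sum>j\<in>S. w S j * x j) \<ge> b S)
      \<and> (\<Sum>j\<in>J. w J j * x j) = b J
      \<and> (\<forall>j\<in>J. x j \<ge> 0) \<and> (\<forall>j. j \<notin> J \<longrightarrow> x j = 0)}"

definition xpi :: "'a set \<Rightarrow> ('a set \<Rightarrow> 'a \<Rightarrow> real) \<Rightarrow> ('a set \<Rightarrow> real) \<Rightarrow> 'a list \<Rightarrow> ('a \<Rightarrow> real)" where
  "xpi J w b p = (THE x. (\<forall>k < length p. (\<Sum>j\<in>Sk p k. w (Sk p k) j * x j) = b (Sk p k))
                        \<and> (\<forall>j. j \<notin> J \<longrightarrow> x j = 0))"

definition ext_polymatroid :: "'a set \<Rightarrow> 'a set set \<Rightarrow> ('a set \<Rightarrow> 'a \<Rightarrow> real) \<Rightarrow> ('a set \<Rightarrow> real) \<Rightarrow> bool" where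
  "ext_polymatroid J F w b = (\<forall>p \<in> full_strings J F. xpi J w b p \<in> polyP J F w b)"

text \<open>Increment y^{S_k} of the algorithm, expressed through nu:
  y^{S_1} = nu_{pi_1}, y^{S_k} = nu_{pi_k} - nu_{pi_(k-1)}.\<close>
definition yinc :: "('a \<Rightarrow> real) \<Rightarrow> 'a list \<Rightarrow> nat \<Rightarrow> real" where
  "yinc \<nu> p k = (if k = 0 then \<nu> (p ! 0) else \<nu> (p ! k) - \<nu> (p ! (k - 1)))"

definition ratio :: "('a \<Rightarrow> real) \<Rightarrow> ('a set \<Rightarrow> 'a \<Rightarrow> real) \<Rightarrow> ('a \<Rightarrow> real) \<Rightarrow> 'a list \<Rightarrow> nat \<Rightarrow> 'a \<Rightarrow> real" where
  "ratio c w \<nu> p k j = (c j - (\<Sum>l<k. yinc \<nu> p l * w (Sk p l) j)) / w (Sk p k) j"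

text \<open>(p, nu) is a possible output of algorithm AG_1 on input c (any choice of minimizers).\<close>
definition AG1_output :: "'a set \<Rightarrow> 'a set set \<Rightarrow> ('a set \<Rightarrow> 'a \<Rightarrow> real) \<Rightarrow> ('a \<Rightarrow> real)
    \<Rightarrow> 'a list \<Rightarrow> ('a \<Rightarrow> real) \<Rightarrow> bool" where
  "AG1_output J F w c p \<nu> = (distinct p \<and> set p = J \<and>
     (\<forall>k < length p. p ! k \<in> inner_bd F (Sk p k)
        \<and> (\<forall>j \<in> inner_bd F (Sk p k). ratio c w \<nu> p k (p ! k) \<le> ratio c w \<nu> p k j)
        \<and> yinc \<nu> p k = ratio c w \<nu> p k (p ! k)))"

definition ypi :: "'a list \<Rightarrow> ('a \<Rightarrow> real) \<Rightarrow> 'a set \<Rightarrow> real" where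
  "ypi p \<nu> S = (\<Sum>k<length p. if S = Sk p k then yinc \<nu> p k else 0)"

definition dual_feasible :: "'a set \<Rightarrow> 'a set set \<Rightarrow> ('a set \<Rightarrow> 'a \<Rightarrow> real) \<Rightarrow> ('a \<Rightarrow> real)
    \<Rightarrow> ('a set \<Rightarrow> real) \<Rightarrow> bool" where
  "dual_feasible J F w c y = ((\<forall>j\<in>J. (\<Sum>S\<in>{S\<in>F. j \<in> S}. w S j * y S) \<le> c j)
      \<and> (\<forall>S \<in> F - {J}. y S \<ge> 0))"

definition dual_obj :: "'a set set \<Rightarrow> ('a set \<Rightarrow> real) \<Rightarrow> ('a set \<Rightarrow> real) \<Rightarrow> real" where
  "dual_obj F b y = (\<Sum>S\<in>F. b S * y S)"

end

theory Submission
  imports Defs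
begin

text \<open>The increments y^{S_k} of AG_1 are chosen so that every dual constraint is tight:
  c_{pi_m} = sum_{k <= m} y^{S_k} w^{S_k}_{pi_m}, because pi_m lies in exactly S_1, ..., S_m.
  Exchanging the order of summation turns the primal objective into
  sum_k y^{S_k} (sum_{j in S_k} w^{S_k}_j x_j), which at x^pi is the dual objective
  sum_k y^{S_k} b^{S_k}. If nu is nondecreasing along pi, the increments for k >= 2 are
  nonnegative, so y^pi is dual feasible and weak duality makes the pair optimal.\<close>

lemma Sk_0: "Sk p 0 = set p"
  by (simp add: Sk_def)

lemma Sk_Cons_0: "Sk (a # q) 0 = insert a (set q)"
  by (simp add: Sk_def)

lemma Sk_Cons_Suc: "Sk (a # q) (Suc k) = Sk q k"
  by (simp add: Sk_def)

lemma Sk_subset: "Sk p k \<subseteq> set p"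
  by (auto simp: Sk_def dest: in_set_dropD)

lemma nth_mem_Sk_iff:
  assumes "distinct p" "m < length p"
  shows "p ! m \<in> Sk p k \<longleftrightarrow> k \<le> m"
proof
  assume "p ! m \<in> Sk p k"
  then obtain i where "i < length (drop k p)" "drop k p ! i = p ! m"
    by (auto simp: Sk_def in_set_conv_nth)
  then have "k + i = m"
    using assms nth_eq_iff_index_eq by fastforce
  then show "k \<le> m" by simp
next
  assume "k \<le> m"
  then have "drop k p ! (m - k) = p ! m" "m - k < length (drop k p)"
    using assms by auto
  then show "p ! m \<in> Sk p k"
    unfolding Sk_def by (metis nth_mem)
qed

lemma Sk_Suc:
  assumes "distinct p" "k < length p"
  shows "Sk p (Suc k) = Sk p k - {p ! k}"
proof -
  have "drop k p = p ! k # drop (Suc k) p"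
    using assms by (simp add: Cons_nth_drop_Suc)
  moreover have "distinct (drop k p)"
    using assms by simp
  ultimately show ?thesis
    unfolding Sk_def by (metis Diff_insert_absorb distinct.simps(2) list.set(2))
qed

text \<open>The system defining x^pi; it is triangular because S_k loses exactly pi_k at each step.\<close>

definition solves_string_system ::
    "('a set \<Rightarrow> 'a \<Rightarrow> real) \<Rightarrow> ('a set \<Rightarrow> real) \<Rightarrow> 'a list \<Rightarrow> ('a \<Rightarrow> real) \<Rightarrow> bool" where
  "solves_string_system W B q x \<longleftrightarrow>
     (\<forall>k<length q. (\<Sum>j\<in>Sk q k. W (Sk q k) j * x j) = B (Sk q k)) \<and> (\<forall>j. j \<notin> set q \<longrightarrow> x j = 0)"

lemma solves_string_system_Cons:
  assumes "a \<notin> set q"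
  shows "solves_string_system W B (a # q) x \<longleftrightarrow>
           solves_string_system W B q (x(a := 0)) \<and>
           (\<Sum>j\<in>insert a (set q). W (insert a (set q)) j * x j) = B (insert a (set q))"
proof -
  have "(\<Sum>j\<in>Sk q k. W (Sk q k) j * (x(a := 0)) j) = (\<Sum>j\<in>Sk q k. W (Sk q k) j * x j)" for k
    using Sk_subset[of q k] assms by (intro sum.cong) auto
  then have "(\<forall>k<length (a # q). (\<Sum>j\<in>Sk (a # q) k. W (Sk (a # q) k) j * x j) = B (Sk (a # q) k))
      \<longleftrightarrow> (\<Sum>j\<in>insert a (set q). W (insert a (set q)) j * x j) = B (insert a (set q))
          \<and> (\<forall>k<length q. (\<Sum>j\<in>Sk q k. W (Sk q k) j * (x(a := 0)) j) = B (Sk q k))"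
    by (auto simp: All_less_Suc2 Sk_Cons_0 Sk_Cons_Suc)
  then show ?thesis
    unfolding solves_string_system_def by auto
qed

lemma solves_string_system_exists:
  assumes "distinct q" "\<forall>k<length q. W (Sk q k) (q ! k) \<noteq> 0"
  shows "\<exists>x. solves_string_system W B q x"
  using assms
proof (induction q)
  case Nil
  show ?case by (auto simp: solves_string_system_def)
next
  case (Cons a q)
  let ?S = "insert a (set q)"
  have a_notin: "a \<notin> set q" and "distinct q"
    using Cons.prems by auto
  moreover have "\<forall>k<length q. W (Sk q k) (q ! k) \<noteq> 0"
    using Cons.prems(2) by (auto simp: Sk_Cons_Suc)
  ultimately obtain x where x: "solves_string_system W B q x"
    using Cons.IH by blast
  have "W ?S a \<noteq> 0"
    using Cons.prems(2) by (auto simp: Sk_Cons_0 dest: spec[of _ 0])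
  define v where "v = (B ?S - (\<Sum>j\<in>set q. W ?S j * x j)) / W ?S a"
  have "x(a := v, a := 0) = x"
    using x a_notin by (auto simp: solves_string_system_def)
  moreover have "(\<Sum>j\<in>set q. W ?S j * (x(a := v)) j) = (\<Sum>j\<in>set q. W ?S j * x j)"
    using a_notin by (intro sum.cong) auto
  then have "(\<Sum>j\<in>?S. W ?S j * (x(a := v)) j) = B ?S"
    using a_notin \<open>W ?S a \<noteq> 0\<close> by (simp add: v_def)
  ultimately have "solves_string_system W B (a # q) (x(a := v))"
    using x solves_string_system_Cons[OF a_notin] by simp
  then show ?case by blast
qed

lemma solves_string_system_unique:
  assumes "distinct q" "\<forall>k<length q. W (Sk q k) (q ! k) \<noteq> 0"
    and "solves_string_system W B q x" "solves_string_system W B q y"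
  shows "x = y"
  using assms
proof (induction q arbitrary: x y)
  case Nil
  then show ?case by (auto simp: solves_string_system_def)
next
  case (Cons a q)
  let ?S = "insert a (set q)"
  have a_notin: "a \<notin> set q"
    using Cons.prems by auto
  have "\<forall>k<length q. W (Sk q k) (q ! k) \<noteq> 0"
    using Cons.prems(2) by (auto simp: Sk_Cons_Suc)
  moreover have "solves_string_system W B q (x(a := 0))" "solves_string_system W B q (y(a := 0))"
    using Cons.prems(3,4) solves_string_system_Cons[OF a_notin] by auto
  ultimately have agree: "x(a := 0) = y(a := 0)"
    using Cons.IH Cons.prems(1) by simp
  have "(\<Sum>j\<in>set q. W ?S j * x j) = (\<Sum>j\<in>set q. W ?S j * y j)"
    using agree a_notin by (intro sum.cong) (auto simp: fun_eq_iff split: if_splits)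
  moreover have "(\<Sum>j\<in>?S. W ?S j * x j) = (\<Sum>j\<in>?S. W ?S j * y j)"
    using Cons.prems(3,4) solves_string_system_Cons[OF a_notin] by simp
  moreover have "W ?S a \<noteq> 0"
    using Cons.prems(2) by (auto simp: Sk_Cons_0 dest: spec[of _ 0])
  ultimately have "x a = y a"
    using a_notin by simp
  with agree show ?case
    by (metis fun_upd_triv fun_upd_upd)
qed

lemma solves_string_system_xpi:
  assumes "distinct p" "set p = J" "\<forall>k<length p. w (Sk p k) (p ! k) \<noteq> 0"
  shows "solves_string_system w b p (xpi J w b p)"
proof -
  have "xpi J w b p = (THE x. solves_string_system w b p x)"
    using assms(2) by (simp add: xpi_def solves_string_system_def)
  moreover have "\<exists>!x. solves_string_system w b p x"
    using assms solves_string_system_exists solves_string_system_unique by blast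
  ultimately show ?thesis
    by (simp add: theI')
qed

lemma top_in_family:
  assumes "finite J" "F \<subseteq> Pow J" "{} \<in> F"
    and aug: "\<And>S. S \<in> F \<Longrightarrow> S \<noteq> J \<Longrightarrow> \<exists>j \<in> J - S. insert j S \<in> F"
  shows "J \<in> F"
proof (rule ccontr)
  assume "J \<notin> F"
  have "finite F"
    using assms(1,2) by (meson finite_Pow_iff finite_subset)
  then have "Max (card ` F) \<in> card ` F"
    using assms(3) by (intro Max_in) auto
  then obtain S where S: "S \<in> F" "card S = Max (card ` F)"
    by auto
  have max: "card T \<le> card S" if "T \<in> F" for T
    using S(2) \<open>finite F\<close> that by simp
  obtain j where j: "j \<in> J - S" "insert j S \<in> F"
    using aug S(1) \<open>J \<notin> F\<close> by blast
  have "finite S"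
    using S assms(1,2) by (meson PowD finite_subset subsetD)
  then have "card (insert j S) = Suc (card S)"
    using j(1) by simp
  then show False
    using max[OF j(2)] by simp
qed

lemma sum_family_swap:
  fixes y :: "'a set \<Rightarrow> real" and w :: "'a set \<Rightarrow> 'a \<Rightarrow> real" and x :: "'a \<Rightarrow> real"
  assumes "finite J" "F \<subseteq> Pow J"
  shows "(\<Sum>S\<in>F. y S * (\<Sum>j\<in>S. w S j * x j)) = (\<Sum>j\<in>J. x j * (\<Sum>S\<in>{S\<in>F. j \<in> S}. w S j * y S))"
proof -
  have "finite F"
    using assms by (meson finite_Pow_iff finite_subset)
  have restrict: "{j. j \<in> J \<and> j \<in> S} = S" if "S \<in> F" for S
    using that assms(2) by auto
  have "(\<Sum>S\<in>F. y S * (\<Sum>j\<in>S. w S j * x j))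
      = (\<Sum>S\<in>F. \<Sum>j\<in>{j. j \<in> J \<and> j \<in> S}. y S * w S j * x j)"
    by (intro sum.cong refl) (simp add: restrict sum_distrib_left mult.assoc)
  also have "\<dots> = (\<Sum>j\<in>J. \<Sum>S\<in>{S. S \<in> F \<and> j \<in> S}. y S * w S j * x j)"
    using \<open>finite F\<close> assms(1) by (rule sum.swap_restrict)
  also have "\<dots> = (\<Sum>j\<in>J. x j * (\<Sum>S\<in>{S\<in>F. j \<in> S}. w S j * y S))"
    by (simp add: sum_distrib_left mult_ac)
  finally show ?thesis .
qed

lemma weak_duality:
  assumes "finite J" "F \<subseteq> Pow J" "J \<in> F"
    and x: "x \<in> polyP J F w b" and y: "dual_feasible J F w c y"
  shows "dual_obj F b y \<le> (\<Sum>j\<in>J. c j * x j)"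
proof -
  have "dual_obj F b y \<le> (\<Sum>S\<in>F. y S * (\<Sum>j\<in>S. w S j * x j))"
    unfolding dual_obj_def
  proof (rule sum_mono)
    fix S assume "S \<in> F"
    show "b S * y S \<le> y S * (\<Sum>j\<in>S. w S j * x j)"
    proof (cases "S = J")
      case True
      then show ?thesis using x by (simp add: polyP_def)
    next
      case False
      then have "y S \<ge> 0" "b S \<le> (\<Sum>j\<in>S. w S j * x j)"
        using x y \<open>S \<in> F\<close> by (auto simp: polyP_def dual_feasible_def)
      then show ?thesis by (metis mult.commute mult_left_mono)
    qed
  qed
  also have "\<dots> = (\<Sum>j\<in>J. x j * (\<Sum>S\<in>{S\<in>F. j \<in> S}. w S j * y S))"
    using assms(1,2) by (rule sum_family_swap)
  also have "\<dots> \<le> (\<Sum>j\<in>J. c j * x j)"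
  proof (rule sum_mono)
    fix j assume "j \<in> J"
    then have "x j \<ge> 0" "(\<Sum>S\<in>{S\<in>F. j \<in> S}. w S j * y S) \<le> c j"
      using x y by (auto simp: polyP_def dual_feasible_def)
    then show "x j * (\<Sum>S\<in>{S\<in>F. j \<in> S}. w S j * y S) \<le> c j * x j"
      by (metis mult.commute mult_left_mono)
  qed
  finally show ?thesis .
qed

lemma optimality_certificate:
  assumes "finite J" "F \<subseteq> Pow J" "J \<in> F"
    and "x \<in> polyP J F w b" "dual_feasible J F w c y"
    and "dual_obj F b y = (\<Sum>j\<in>J. c j * x j)"
  shows "(\<forall>x' \<in> polyP J F w b. (\<Sum>j\<in>J. c j * x j) \<le> (\<Sum>j\<in>J. c j * x' j))
    \<and> (\<forall>y'. dual_feasible J F w c y' \<longrightarrow> dual_obj F b y' \<le> dual_obj F b y)"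
  using weak_duality[OF assms(1-3)] assms(4-6) by metis

lemma sum_yinc_unfold:
  assumes "p \<noteq> []"
  shows "(\<Sum>k<length p. yinc \<nu> p k * A k)
    = \<nu> (p ! 0) * A 0 + (\<Sum>k\<in>{1..<length p}. (\<nu> (p ! k) - \<nu> (p ! (k - 1))) * A k)"
proof -
  have "{..<length p} = insert 0 {1..<length p}"
    using assms by auto
  moreover have "(\<Sum>k\<in>{1..<length p}. yinc \<nu> p k * A k)
      = (\<Sum>k\<in>{1..<length p}. (\<nu> (p ! k) - \<nu> (p ! (k - 1))) * A k)"
    by (intro sum.cong) (auto simp: yinc_def)
  ultimately show ?thesis
    by (simp add: yinc_def)
qed

locale AG1_run =
  fixes J :: "'a set" and F :: "'a set set" and w :: "'a set \<Rightarrow> 'a \<Rightarrow> real"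
    and c :: "'a \<Rightarrow> real" and p :: "'a list" and \<nu> :: "'a \<Rightarrow> real"
  assumes finite_J: "finite J" and family_subset: "F \<subseteq> Pow J" and top_in_F: "J \<in> F"
    and weights_pos: "\<And>S j. S \<in> F \<Longrightarrow> j \<in> S \<Longrightarrow> w S j > 0"
    and run: "AG1_output J F w c p \<nu>"
begin

lemma distinct_p: "distinct p" and set_p: "set p = J"
  using run by (simp_all add: AG1_output_def)

lemma pivot_in_inner_bd: "k < length p \<Longrightarrow> p ! k \<in> inner_bd F (Sk p k)"
  using run by (simp add: AG1_output_def)

lemma yinc_eq_ratio: "k < length p \<Longrightarrow> yinc \<nu> p k = ratio c w \<nu> p k (p ! k)"
  using run by (simp add: AG1_output_def)

lemma finite_F: "finite F"
  using finite_J family_subset by (meson finite_Pow_iff finite_subset)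

lemma Sk_in_family: "k < length p \<Longrightarrow> Sk p k \<in> F"
proof (induction k)
  case 0
  then show ?case using top_in_F set_p by (simp add: Sk_0)
next
  case (Suc k)
  then have "Sk p k - {p ! k} \<in> F"
    using pivot_in_inner_bd by (simp add: inner_bd_def)
  then show ?case
    using Sk_Suc[OF distinct_p] Suc.prems by simp
qed

lemma full_string: "p \<in> full_strings J F"
  using distinct_p set_p Sk_in_family by (simp add: full_strings_def)

lemma pivot_weight_pos: "k < length p \<Longrightarrow> w (Sk p k) (p ! k) > 0"
  using weights_pos Sk_in_family nth_mem_Sk_iff[OF distinct_p] by simp

lemma cost_pivot:
  assumes "m < length p"
  shows "c (p ! m) = (\<Sum>k<Suc m. yinc \<nu> p k * w (Sk p k) (p ! m))"
proof -
  have "yinc \<nu> p m * w (Sk p m) (p ! m) = c (p ! m) - (\<Sum>k<m. yinc \<nu> p k * w (Sk p k) (p ! m))"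
    using yinc_eq_ratio[OF assms] pivot_weight_pos[OF assms] by (simp add: ratio_def field_simps)
  then show ?thesis by simp
qed

lemma sum_ypi: "(\<Sum>S\<in>F. ypi p \<nu> S * A S) = (\<Sum>k<length p. yinc \<nu> p k * A (Sk p k))"
proof -
  have "(\<Sum>S\<in>F. ypi p \<nu> S * A S) = (\<Sum>S\<in>F. \<Sum>k<length p. if S = Sk p k then yinc \<nu> p k * A S else 0)"
    unfolding ypi_def by (auto simp: sum_distrib_right intro!: sum.cong)
  also have "\<dots> = (\<Sum>k<length p. \<Sum>S\<in>F. if S = Sk p k then yinc \<nu> p k * A S else 0)"
    by (rule sum.swap)
  also have "\<dots> = (\<Sum>k<length p. yinc \<nu> p k * A (Sk p k))"
    using finite_F Sk_in_family by (intro sum.cong refl) simp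
  finally show ?thesis .
qed

lemma dual_constraint_tight:
  assumes "j \<in> J"
  shows "(\<Sum>S\<in>{S\<in>F. j \<in> S}. w S j * ypi p \<nu> S) = c j"
proof -
  obtain m where m: "m < length p" "j = p ! m"
    using assms set_p by (metis in_set_conv_nth)
  have "(\<Sum>S\<in>{S\<in>F. j \<in> S}. w S j * ypi p \<nu> S) = (\<Sum>S\<in>F. ypi p \<nu> S * (if j \<in> S then w S j else 0))"
    using finite_F by (simp add: sum.inter_filter mult.commute if_distrib cong: if_cong)
  also have "\<dots> = (\<Sum>k<length p. yinc \<nu> p k * (if j \<in> Sk p k then w (Sk p k) j else 0))"
    by (rule sum_ypi)
  also have "\<dots> = (\<Sum>k<length p. if k \<le> m then yinc \<nu> p k * w (Sk p k) j else 0)"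
    using m nth_mem_Sk_iff[OF distinct_p] by (intro sum.cong) auto
  also have "\<dots> = (\<Sum>k\<in>{k\<in>{..<length p}. k \<le> m}. yinc \<nu> p k * w (Sk p k) j)"
    by (rule sum.inter_filter[symmetric]) simp
  also have "{k\<in>{..<length p}. k \<le> m} = {..<Suc m}"
    using m by auto
  finally show ?thesis
    using cost_pivot m by simp
qed

lemma cost_decomposition:
  "(\<Sum>j\<in>J. c j * x j) = (\<Sum>k<length p. yinc \<nu> p k * (\<Sum>j\<in>Sk p k. w (Sk p k) j * x j))"
proof -
  have "(\<Sum>j\<in>J. c j * x j) = (\<Sum>j\<in>J. x j * (\<Sum>S\<in>{S\<in>F. j \<in> S}. w S j * ypi p \<nu> S))"
    using dual_constraint_tight by (simp add: mult.commute)
  also have "\<dots> = (\<Sum>S\<in>F. ypi p \<nu> S * (\<Sum>j\<in>S. w S j * x j))"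
    using finite_J family_subset by (rule sum_family_swap[symmetric])
  also have "\<dots> = (\<Sum>k<length p. yinc \<nu> p k * (\<Sum>j\<in>Sk p k. w (Sk p k) j * x j))"
    by (rule sum_ypi)
  finally show ?thesis .
qed

lemma dual_obj_ypi: "dual_obj F b (ypi p \<nu>) = (\<Sum>k<length p. yinc \<nu> p k * b (Sk p k))"
  unfolding dual_obj_def using sum_ypi by (simp add: mult.commute)

lemma primal_value: "(\<Sum>j\<in>J. c j * xpi J w b p j) = (\<Sum>k<length p. yinc \<nu> p k * b (Sk p k))"
proof -
  have "\<forall>k<length p. w (Sk p k) (p ! k) \<noteq> 0"
    using pivot_weight_pos by (metis less_irrefl)
  then have "solves_string_system w b p (xpi J w b p)"
    by (rule solves_string_system_xpi[OF distinct_p set_p])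
  then show ?thesis
    using cost_decomposition by (simp add: solves_string_system_def)
qed

lemma dual_feasible_ypi:
  assumes mono: "\<forall>k. Suc k < length p \<longrightarrow> \<nu> (p ! k) \<le> \<nu> (p ! Suc k)"
  shows "dual_feasible J F w c (ypi p \<nu>)"
proof -
  have "0 \<le> ypi p \<nu> S" if "S \<in> F - {J}" for S
    unfolding ypi_def
  proof (intro sum_nonneg)
    fix k assume "k \<in> {..<length p}"
    moreover have "S = Sk p k \<Longrightarrow> k \<noteq> 0"
      using that set_p by (auto simp: Sk_0)
    ultimately show "0 \<le> (if S = Sk p k then yinc \<nu> p k else 0)"
      using mono[rule_format, of "k - 1"] by (auto simp: yinc_def)
  qed
  then show ?thesis
    using dual_constraint_tight by (simp add: dual_feasible_def)
qed

end

theorem theorem1: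
  fixes J :: "'a set" and F :: "'a set set"
    and w :: "'a set \<Rightarrow> 'a \<Rightarrow> real" and b :: "'a set \<Rightarrow> real"
    and c :: "'a \<Rightarrow> real" and p :: "'a list" and \<nu> :: "'a \<Rightarrow> real"
  assumes finJ: "finite J" and neJ: "J \<noteq> {}"
    and FJ: "F \<subseteq> Pow J" and empty: "{} \<in> F"
    and bd: "\<And>S. S \<in> F \<Longrightarrow> S \<noteq> {} \<Longrightarrow> inner_bd F S \<noteq> {}"
    and aug: "\<And>S. S \<in> F \<Longrightarrow> S \<noteq> J \<Longrightarrow> \<exists>j \<in> J - S. insert j S \<in> F"
    and bpos: "\<And>S. S \<in> F \<Longrightarrow> b S \<ge> 0"
    and wpos: "\<And>S j. S \<in> F \<Longrightarrow> j \<in> S \<Longrightarrow> w S j > 0"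
    and poly: "ext_polymatroid J F w b"
    and alg: "AG1_output J F w c p \<nu>"
  shows
    "(\<forall>x :: 'a \<Rightarrow> real. (\<Sum>j\<in>J. c j * x j) =
        \<nu> (p ! 0) * (\<Sum>j\<in>Sk p 0. w (Sk p 0) j * x j)
        + (\<Sum>k\<in>{1..<length p}. (\<nu> (p ! k) - \<nu> (p ! (k - 1))) * (\<Sum>j\<in>Sk p k. w (Sk p k) j * x j)))
     \<and> (\<Sum>j\<in>J. c j * xpi J w b p j) =
        \<nu> (p ! 0) * b (Sk p 0) + (\<Sum>k\<in>{1..<length p}. (\<nu> (p ! k) - \<nu> (p ! (k - 1))) * b (Sk p k))
     \<and> ((\<forall>k. Suc k < length p \<longrightarrow> \<nu> (p ! k) \<le> \<nu> (p ! Suc k)) \<longrightarrow>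
          xpi J w b p \<in> polyP J F w b
        \<and> dual_feasible J F w c (ypi p \<nu>)
        \<and> (\<forall>x \<in> polyP J F w b. (\<Sum>j\<in>J. c j * xpi J w b p j) \<le> (\<Sum>j\<in>J. c j * x j))
        \<and> (\<forall>y. dual_feasible J F w c y \<longrightarrow> dual_obj F b y \<le> dual_obj F b (ypi p \<nu>))
        \<and> (\<Sum>j\<in>J. c j * xpi J w b p j) =
             \<nu> (p ! 0) * b (Sk p 0) + (\<Sum>k\<in>{1..<length p}. (\<nu> (p ! k) - \<nu> (p ! (k - 1))) * b (Sk p k))
        \<and> dual_obj F b (ypi p \<nu>) =
             \<nu> (p ! 0) * b (Sk p 0) + (\<Sum>k\<in>{1..<length p}. (\<nu> (p ! k) - \<nu> (p ! (k - 1))) * b (Sk p k)))"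
proof -
  interpret AG1_run J F w c p \<nu>
    using finJ FJ top_in_family[OF finJ FJ empty aug] wpos alg by unfold_locales
  have unfold: "(\<Sum>k<length p. yinc \<nu> p k * A k)
      = \<nu> (p ! 0) * A 0 + (\<Sum>k\<in>{1..<length p}. (\<nu> (p ! k) - \<nu> (p ! (k - 1))) * A k)" for A
    using set_p neJ by (intro sum_yinc_unfold) auto
  have xpi_feasible: "xpi J w b p \<in> polyP J F w b"
    using poly full_string by (simp add: ext_polymatroid_def)
  have optimal: "dual_feasible J F w c (ypi p \<nu>)
        \<and> (\<forall>x \<in> polyP J F w b. (\<Sum>j\<in>J. c j * xpi J w b p j) \<le> (\<Sum>j\<in>J. c j * x j))
        \<and> (\<forall>y. dual_feasible J F w c y \<longrightarrow> dual_obj F b y \<le> dual_obj F b (ypi p \<nu>))"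
    if "\<forall>k. Suc k < length p \<longrightarrow> \<nu> (p ! k) \<le> \<nu> (p ! Suc k)"
    using optimality_certificate[OF finJ FJ top_in_F xpi_feasible dual_feasible_ypi[OF that]]
      dual_feasible_ypi[OF that] primal_value dual_obj_ypi by simp
  show ?thesis
    using cost_decomposition primal_value dual_obj_ypi xpi_feasible optimal by (simp add: unfold)
qed

end
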